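(* Let $R$ be a commutative ring with nonzero identity, $\delta$ an expansion of ideals of $R$, and $I$ a proper ideal of $R$ with $\delta(I)\neq R$. If $I$ is a $\delta$-$n$-ideal of $R$, then $I\subseteq\sqrt{0}$.
   Context: An expansion of ideals of a ring $R$ is a map $\delta$ from the set of ideals of $R$ to itself such that $I\subseteq\delta(I)$ for every ideal $I$, and $\delta(I)\subseteq\delta(J)$ whenever $I\subseteq J$. $\sqrt{0}$ denotes the nilradical of $R$. Given an expansion $\delta$, a proper ideal $I$ of $R$ is a $\delta$-$n$-ideal if whenever $a,b\in R$ with $ab\in I$ and $a\notin\sqrt{0}$, then $b\in\delta(I)$. *)

theory Defs
  imports "HOL-Algebra.Algebra"
begin

definition nilradical :: "('a, 'b) ring_scheme \<Rightarrow> 'a set" where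
  "nilradical R = {a \<in> carrier R. \<exists>n::nat. a [^]\<^bsub>R\<^esub> n = \<zero>\<^bsub>R\<^esub>}"

definition expansion :: "('a, 'b) ring_scheme \<Rightarrow> ('a set \<Rightarrow> 'a set) \<Rightarrow> bool" where
  "expansion R \<delta> \<longleftrightarrow>
     (\<forall>I. ideal I R \<longrightarrow> ideal (\<delta> I) R) \<and>
     (\<forall>I. ideal I R \<longrightarrow> I \<subseteq> \<delta> I) \<and>
     (\<forall>I J. ideal I R \<longrightarrow> ideal J R \<longrightarrow> I \<subseteq> J \<longrightarrow> \<delta> I \<subseteq> \<delta> J)"

definition delta_n_ideal ::
  "('a, 'b) ring_scheme \<Rightarrow> ('a set \<Rightarrow> 'a set) \<Rightarrow> 'a set \<Rightarrow> bool" where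
  "delta_n_ideal R \<delta> I \<longleftrightarrow>
     ideal I R \<and> I \<noteq> carrier R \<and>
     (\<forall>a\<in>carrier R. \<forall>b\<in>carrier R.
        a \<otimes>\<^bsub>R\<^esub> b \<in> I \<longrightarrow> a \<notin> nilradical R \<longrightarrow> b \<in> \<delta> I)"

end

theory Submission
  imports Defs
begin

lemma delta_n_ideal_one_mem_expansion:
  assumes "delta_n_ideal R \<delta> I" and "a \<in> I" and "a \<notin> nilradical R"
  shows "\<one>\<^bsub>R\<^esub> \<in> \<delta> I"
proof -
  have I: "ideal I R"
    using assms(1) unfolding delta_n_ideal_def by blast
  then interpret ring R
    by (rule ideal.axioms(2))
  have a: "a \<in> carrier R"
    using ideal.Icarr[OF I assms(2)] .
  have "a \<otimes>\<^bsub>R\<^esub> \<one>\<^bsub>R\<^esub> \<in> I"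
    using assms(2) a by simp
  then show ?thesis
    using assms(1,3) a unfolding delta_n_ideal_def by blast
qed

lemma delta_n_ideal_subset_nilradical:
  assumes "delta_n_ideal R \<delta> I" and "ideal (\<delta> I) R" and "\<delta> I \<noteq> carrier R"
  shows "I \<subseteq> nilradical R"
  using delta_n_ideal_one_mem_expansion[OF assms(1)] ideal.one_imp_carrier[OF assms(2)] assms(3)
  by blast

theorem proposition2p3:
  fixes R (structure) and \<delta> :: "'a set \<Rightarrow> 'a set" and I :: "'a set"
  assumes "cring R"
    and "\<one>\<^bsub>R\<^esub> \<noteq> \<zero>\<^bsub>R\<^esub>"
    and "expansion R \<delta>"
    and "ideal I R"
    and "I \<noteq> carrier R"
    and "\<delta> I \<noteq> carrier R"
    and "delta_n_ideal R \<delta> I"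
  shows "I \<subseteq> nilradical R"
proof -
  have "ideal (\<delta> I) R"
    using assms(3,4) unfolding expansion_def by blast
  then show ?thesis
    using delta_n_ideal_subset_nilradical assms(6,7) by blast
qed

end
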